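(* There is an absolute constant $c>0$ such that the following holds. Let $k\geq 2$ be an integer and let $A=\{a_1<\cdots<a_N\}$ be a finite set of real numbers which is $k$-convex. Then \[ |2^{k}A-(2^{k}-1)A|\geq c\,\frac{|A|^{k+1}}{2^{k^2}}. \]
   Context: For a set $A\subset\mathbb{R}$ and nonnegative integers $m,n$, $mA-nA=\{(x_1+\cdots+x_m)-(x_{m+1}+\cdots+x_{m+n}):x_1,\ldots,x_{m+n}\in A\}$. A finite set $A=\{a_1<\cdots<a_N\}$ of reals is regarded as the sequence of its elements in increasing order. Such a sequence is called $1$-convex (convex) if its sequence of first differences $a_{i+1}-a_i$, $1\leq i\leq N-1$, is strictly increasing. Inductively, for $k\geq 2$, the increasing sequence $a_1<\cdots<a_N$ is called $k$-convex if its sequence of first differences $(a_{i+1}-a_i)_{1\le i\le N-1}$ is $(k-1)$-convex (in particular this difference sequence is itself strictly increasing). *)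

theory Defs
  imports Complex_Main
begin

definition strict_incr :: "real list \<Rightarrow> bool" where
  "strict_incr xs \<longleftrightarrow> (\<forall>i. Suc i < length xs \<longrightarrow> xs ! i < xs ! Suc i)"

definition diffs :: "real list \<Rightarrow> real list" where
  "diffs xs = map (\<lambda>i. xs ! Suc i - xs ! i) [0..<length xs - 1]"

text \<open>So 1-convex is
  "strictly increasing first differences" (for an increasing sequence).\<close>
fun kconvex_seq :: "nat \<Rightarrow> real list \<Rightarrow> bool" where
  "kconvex_seq 0 xs = strict_incr xs"
| "kconvex_seq (Suc k) xs = (strict_incr xs \<and> kconvex_seq k (diffs xs))"

definition kconvex_set :: "nat \<Rightarrow> real set \<Rightarrow> bool" where
  "kconvex_set k A \<longleftrightarrow> finite A \<and> kconvex_seq k (sorted_list_of_set A)"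

definition sumdiff :: "nat \<Rightarrow> nat \<Rightarrow> real set \<Rightarrow> real set" where
  "sumdiff m n A = {(\<Sum>i<m. x i) - (\<Sum>i<n. x (m + i)) | x. \<forall>i < m + n. x i \<in> A}"

end

theory Submission
  imports Defs
begin

(*
  For indices i0 > i1 > ... > ik the number  a(i0) + D a(i1) + D^2 a(i2) + ... + D^k a(ik)
  lies in 2^k A - (2^k - 1) A, since the j-th difference D^j a is a difference of two sums of
  2^(j-1) elements of A. By k-convexity the tail after a(i0) is positive and, inductively,
  smaller than D a(i0); so the number lies in [a(i0), a(i0 + 1)), which recovers i0, and the
  remaining indices are recovered one level down. Hence |2^k A - (2^k - 1) A| is at least
  binomial(|A|, k + 1) >= (|A| / (k + 1))^(k + 1), and (k + 1)^(k + 1) <= 2^(k^2 + 1) for k >= 2.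
*)

(* List form of sumdiff: closure under sums and differences is just list concatenation. *)
definition list_sumdiff :: "nat \<Rightarrow> nat \<Rightarrow> 'a::ab_group_add set \<Rightarrow> 'a set" where
  "list_sumdiff m n A = {sum_list xs - sum_list ys | xs ys.
     length xs = m \<and> length ys = n \<and> set xs \<subseteq> A \<and> set ys \<subseteq> A}"

lemma list_sumdiffE:
  assumes "u \<in> list_sumdiff m n A"
  obtains xs ys where "u = sum_list xs - sum_list ys" "length xs = m" "length ys = n"
    "set xs \<subseteq> A" "set ys \<subseteq> A"
  using assms unfolding list_sumdiff_def by blast

lemma list_sumdiffI:
  "length xs = m \<Longrightarrow> length ys = n \<Longrightarrow> set xs \<subseteq> A \<Longrightarrow> set ys \<subseteq> A \<Longrightarrow>
   sum_list xs - sum_list ys \<in> list_sumdiff m n A"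
  unfolding list_sumdiff_def by blast

lemma list_sumdiff_zero: "0 \<in> list_sumdiff 0 0 A"
  using list_sumdiffI[of "[]" 0 "[]" 0 A] by simp

lemma list_sumdiff_single: "a \<in> A \<Longrightarrow> a \<in> list_sumdiff 1 0 A"
  using list_sumdiffI[of "[a]" 1 "[]" 0 A] by simp

lemma list_sumdiff_add:
  assumes "u \<in> list_sumdiff m n A" "v \<in> list_sumdiff m' n' A"
  shows "u + v \<in> list_sumdiff (m + m') (n + n') A"
proof -
  obtain xs ys where u: "u = sum_list xs - sum_list ys" and "length xs = m" "length ys = n"
    "set xs \<subseteq> A" "set ys \<subseteq> A" using assms(1) by (rule list_sumdiffE)
  moreover obtain xs' ys' where v: "v = sum_list xs' - sum_list ys'" and "length xs' = m'"
    "length ys' = n'" "set xs' \<subseteq> A" "set ys' \<subseteq> A" using assms(2) by (rule list_sumdiffE)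
  ultimately have "sum_list (xs @ xs') - sum_list (ys @ ys') \<in> list_sumdiff (m + m') (n + n') A"
    by (intro list_sumdiffI) auto
  moreover have "u + v = sum_list (xs @ xs') - sum_list (ys @ ys')" unfolding u v by simp
  ultimately show ?thesis by (simp only:)
qed

lemma list_sumdiff_diff:
  assumes "u \<in> list_sumdiff m n A" "v \<in> list_sumdiff m' n' A"
  shows "u - v \<in> list_sumdiff (m + n') (n + m') A"
proof -
  obtain xs ys where u: "u = sum_list xs - sum_list ys" and "length xs = m" "length ys = n"
    "set xs \<subseteq> A" "set ys \<subseteq> A" using assms(1) by (rule list_sumdiffE)
  moreover obtain xs' ys' where v: "v = sum_list xs' - sum_list ys'" and "length xs' = m'"
    "length ys' = n'" "set xs' \<subseteq> A" "set ys' \<subseteq> A" using assms(2) by (rule list_sumdiffE)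
  ultimately have "sum_list (xs @ ys') - sum_list (ys @ xs') \<in> list_sumdiff (m + n') (n + m') A"
    by (intro list_sumdiffI) auto
  moreover have "u - v = sum_list (xs @ ys') - sum_list (ys @ xs')" unfolding u v by simp
  ultimately show ?thesis by (simp only:)
qed

lemma list_sumdiff_subset_sumdiff: "list_sumdiff m n (A :: real set) \<subseteq> sumdiff m n A"
proof
  fix u assume "u \<in> list_sumdiff m n A"
  then obtain xs ys where u: "u = sum_list xs - sum_list ys" and len: "length xs = m" "length ys = n"
    and sub: "set xs \<subseteq> A" "set ys \<subseteq> A" by (rule list_sumdiffE)
  define x where "x i = (xs @ ys) ! i" for i
  have "(\<Sum>i<m. x i) = sum_list xs" "(\<Sum>i<n. x (m + i)) = sum_list ys"
    using len by (simp_all add: x_def sum_list_sum_nth atLeast0LessThan nth_append)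
  moreover have "\<forall>i<m + n. x i \<in> A"
  proof (intro allI impI)
    fix i assume "i < m + n"
    then have "x i \<in> set (xs @ ys)" using len by (simp add: x_def del: set_append)
    then show "x i \<in> A" using sub by auto
  qed
  ultimately show "u \<in> sumdiff m n A"
    unfolding sumdiff_def u by (intro CollectI exI[of _ x]) simp
qed

lemma finite_sumdiff:
  assumes "finite A"
  shows "finite (sumdiff m n A)"
proof -
  let ?val = "\<lambda>xs. (\<Sum>i<m. xs ! i) - (\<Sum>i<n. xs ! (m + i))"
  have "sumdiff m n A \<subseteq> ?val ` {xs. set xs \<subseteq> A \<and> length xs = m + n}"
  proof
    fix u assume "u \<in> sumdiff m n A"
    then obtain x where u: "u = (\<Sum>i<m. x i) - (\<Sum>i<n. x (m + i))" and x: "\<forall>i<m + n. x i \<in> A"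
      unfolding sumdiff_def by blast
    have "u = ?val (map x [0..<m + n])" using u by simp
    moreover have "map x [0..<m + n] \<in> {xs. set xs \<subseteq> A \<and> length xs = m + n}"
      using x by auto
    ultimately show "u \<in> ?val ` {xs. set xs \<subseteq> A \<and> length xs = m + n}" by (rule image_eqI)
  qed
  then show ?thesis
    using finite_lists_length_eq[OF assms] by (meson finite_imageI finite_subset)
qed

lemma sumdiff_nonempty:
  assumes "a \<in> A"
  shows "sumdiff m n A \<noteq> {}"
  using list_sumdiffI[of "replicate m a" m "replicate n a" n A] assms
    list_sumdiff_subset_sumdiff by fastforce

lemma strict_incr_iff_sorted_wrt: "strict_incr xs \<longleftrightarrow> sorted_wrt (<) xs"
  unfolding strict_incr_def by (simp add: sorted_wrt_iff_nth_Suc_transp)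

lemma strict_incr_nth_mono:
  assumes "strict_incr xs" "i \<le> j" "j < length xs"
  shows "xs ! i \<le> xs ! j"
  using assms sorted_wrt_nth_less[of "(<)" xs i j]
  by (cases "i = j") (auto simp: strict_incr_iff_sorted_wrt)

lemma kconvex_seq_strict_incr: "kconvex_seq k xs \<Longrightarrow> strict_incr xs"
  by (cases k) auto

lemma length_diffs [simp]: "length (diffs xs) = length xs - 1"
  by (simp add: diffs_def)

lemma nth_diffs: "Suc i < length xs \<Longrightarrow> diffs xs ! i = xs ! Suc i - xs ! i"
  by (simp add: diffs_def nth_upt less_diff_conv)

lemma strict_incr_diffs_pos: "strict_incr xs \<Longrightarrow> Suc i < length xs \<Longrightarrow> diffs xs ! i > 0"
  by (simp add: strict_incr_def nth_diffs)

lemma set_diffs_subset_list_sumdiff: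
  assumes "set xs \<subseteq> list_sumdiff m n A"
  shows "set (diffs xs) \<subseteq> list_sumdiff (m + n) (n + m) A"
proof
  fix e assume "e \<in> set (diffs xs)"
  then obtain i where i: "Suc i < length xs" and e: "e = xs ! Suc i - xs ! i"
    unfolding diffs_def by (auto simp: less_diff_conv)
  have "xs ! Suc i \<in> set xs" "xs ! i \<in> set xs" using i by simp_all
  then have "xs ! Suc i \<in> list_sumdiff m n A" "xs ! i \<in> list_sumdiff m n A"
    using assms by blast+
  then show "e \<in> list_sumdiff (m + n) (n + m) A"
    unfolding e by (rule list_sumdiff_diff)
qed

fun diff_tower :: "real list \<Rightarrow> nat list \<Rightarrow> real" where
  "diff_tower xs [] = 0"
| "diff_tower xs (i # js) = xs ! i + diff_tower (diffs xs) js"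

lemma diff_tower_bounds:
  assumes "kconvex_seq (length js) xs" "sorted_wrt (>) (i # js)" "i < length xs"
  shows "xs ! i \<le> diff_tower xs (i # js) \<and>
    (Suc i < length xs \<longrightarrow> diff_tower xs (i # js) < xs ! Suc i)"
  using assms
proof (induction js arbitrary: xs i)
  case Nil
  then show ?case by (simp add: strict_incr_def)
next
  case (Cons j js)
  have inc: "strict_incr xs" and kc: "kconvex_seq (length js) (diffs xs)"
    using Cons.prems(1) by simp_all
  have ji: "j < i" and sorted: "sorted_wrt (>) (j # js)"
    using Cons.prems(2) by simp_all
  have "j < length (diffs xs)" using ji Cons.prems(3) by simp
  note IH = Cons.IH[OF kc sorted this]
  have "0 < diffs xs ! j" using strict_incr_diffs_pos[OF inc] ji Cons.prems(3) by simp
  then have lower: "xs ! i \<le> diff_tower xs (i # j # js)" using IH by simp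
  have upper: "diff_tower xs (i # j # js) < xs ! Suc i" if i: "Suc i < length xs"
  proof -
    have "diff_tower (diffs xs) (j # js) < diffs xs ! Suc j" using IH ji i by simp
    also have "\<dots> \<le> diffs xs ! i"
      using strict_incr_nth_mono[OF kconvex_seq_strict_incr[OF kc]] ji i by simp
    also have "\<dots> = xs ! Suc i - xs ! i" using i by (rule nth_diffs)
    finally show ?thesis by simp
  qed
  show ?case using lower upper by blast
qed

lemma diff_tower_eq_imp_head_eq:
  assumes "kconvex_seq (length js) xs" "kconvex_seq (length js') xs"
    "sorted_wrt (>) (i # js)" "sorted_wrt (>) (i' # js')" "i < length xs" "i' < length xs"
    "diff_tower xs (i # js) = diff_tower xs (i' # js')"
  shows "i = i'"
proof -
  have not_less: "\<not> a < b"
    if "kconvex_seq (length as) xs" "kconvex_seq (length bs) xs"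
      "sorted_wrt (>) (a # as)" "sorted_wrt (>) (b # bs)" "a < length xs" "b < length xs"
      "diff_tower xs (a # as) = diff_tower xs (b # bs)" for a b as bs
  proof
    assume "a < b"
    note bounds_a = diff_tower_bounds[OF that(1,3,5)]
    note bounds_b = diff_tower_bounds[OF that(2,4,6)]
    have "diff_tower xs (a # as) < xs ! Suc a" using bounds_a \<open>a < b\<close> that(6) by linarith
    also have "\<dots> \<le> xs ! b"
      using strict_incr_nth_mono[OF kconvex_seq_strict_incr[OF that(1)]] \<open>a < b\<close> that(6) by simp
    also have "\<dots> \<le> diff_tower xs (b # bs)" using bounds_b by (rule conjunct1)
    finally show False using that(7) by simp
  qed
  show ?thesis using not_less[of js js' i i'] not_less[of js' js i' i] assms by fastforce
qed

definition desc_indices :: "nat \<Rightarrow> nat \<Rightarrow> nat list set" where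
  "desc_indices n l = {ds. length ds = l \<and> sorted_wrt (>) ds \<and> set ds \<subseteq> {..<n}}"

lemma inj_on_diff_tower:
  "kconvex_seq k xs \<Longrightarrow> inj_on (diff_tower xs) (desc_indices (length xs) (Suc k))"
proof (induction k arbitrary: xs)
  case 0
  show ?case
  proof (rule inj_onI)
    fix ds ds' assume "ds \<in> desc_indices (length xs) (Suc 0)" "ds' \<in> desc_indices (length xs) (Suc 0)"
      and eq: "diff_tower xs ds = diff_tower xs ds'"
    then obtain i i' where "ds = [i]" "ds' = [i']" "i < length xs" "i' < length xs"
      by (auto simp: desc_indices_def length_Suc_conv)
    with 0 eq show "ds = ds'"
      using diff_tower_eq_imp_head_eq[of "[]" xs "[]" i i'] by simp
  qed
next
  case (Suc k)
  show ?case
  proof (rule inj_onI)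
    fix ds ds' assume ds: "ds \<in> desc_indices (length xs) (Suc (Suc k))"
      and ds': "ds' \<in> desc_indices (length xs) (Suc (Suc k))"
      and eq: "diff_tower xs ds = diff_tower xs ds'"
    obtain i js i' js' where split: "ds = i # js" "ds' = i' # js'"
      using ds ds' by (auto simp: desc_indices_def length_Suc_conv)
    have "i = i'"
      using ds ds' eq Suc.prems unfolding split desc_indices_def
      by (intro diff_tower_eq_imp_head_eq[of js xs js' i i']) auto
    moreover have "js = js'"
    proof (rule inj_onD[OF Suc.IH])
      show "kconvex_seq k (diffs xs)" using Suc.prems by simp
      show "diff_tower (diffs xs) js = diff_tower (diffs xs) js'"
        using eq \<open>i = i'\<close> unfolding split by simp
      show "js \<in> desc_indices (length (diffs xs)) (Suc k)"
        using ds unfolding split desc_indices_def by fastforce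
      show "js' \<in> desc_indices (length (diffs xs)) (Suc k)"
        using ds' unfolding split desc_indices_def by fastforce
    qed
    ultimately show "ds = ds'" unfolding split by simp
  qed
qed

lemma card_desc_indices: "card (desc_indices n l) = n choose l"
proof -
  have "inj_on set (desc_indices n l)"
  proof (rule inj_onI)
    fix ds ds' assume "ds \<in> desc_indices n l" "ds' \<in> desc_indices n l" "set ds = set ds'"
    then have "rev ds' = rev ds"
      by (intro strict_sorted_equal) (simp_all add: desc_indices_def sorted_wrt_rev)
    then show "ds = ds'" by simp
  qed
  moreover have "set ` desc_indices n l = {S. S \<subseteq> {..<n} \<and> card S = l}"
  proof (intro equalityI subsetI)
    fix S assume "S \<in> set ` desc_indices n l"
    then obtain ds where "S = set ds" "length ds = l" "sorted_wrt (>) ds" "set ds \<subseteq> {..<n}"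
      unfolding desc_indices_def by blast
    moreover have "distinct ds"
      using \<open>sorted_wrt (>) ds\<close> strict_sorted_iff[of "rev ds"] by (simp add: sorted_wrt_rev)
    ultimately show "S \<in> {S. S \<subseteq> {..<n} \<and> card S = l}"
      by (simp add: distinct_card)
  next
    fix S assume S: "S \<in> {S. S \<subseteq> {..<n} \<and> card S = l}"
    then have "finite S" using finite_subset by blast
    then have "rev (sorted_list_of_set S) \<in> desc_indices n l"
      using S by (simp add: desc_indices_def sorted_wrt_rev)
    moreover have "S = set (rev (sorted_list_of_set S))" using \<open>finite S\<close> by simp
    ultimately show "S \<in> set ` desc_indices n l" by (rule rev_image_eqI)
  qed
  ultimately show ?thesis
    using card_image[of set "desc_indices n l"] n_subsets[of "{..<n}" l] by simp
qed

lemma diff_tower_mem_list_sumdiff: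
  assumes "set xs \<subseteq> list_sumdiff p p A" "sorted_wrt (>) ds" "set ds \<subseteq> {..<length xs}"
  shows "diff_tower xs ds \<in> list_sumdiff (p * (2 ^ length ds - 1)) (p * (2 ^ length ds - 1)) A"
  using assms
proof (induction ds arbitrary: xs p)
  case Nil
  then show ?case using list_sumdiff_zero by simp
next
  case (Cons i js)
  have "xs ! i \<in> set xs" using Cons.prems(3) by simp
  then have head: "xs ! i \<in> list_sumdiff p p A" using Cons.prems(1) by blast
  have "set (diffs xs) \<subseteq> list_sumdiff (p + p) (p + p) A"
    using set_diffs_subset_list_sumdiff[OF Cons.prems(1)] by simp
  moreover have "sorted_wrt (>) js" "set js \<subseteq> {..<length (diffs xs)}"
    using Cons.prems(2,3) by auto
  ultimately have tail: "diff_tower (diffs xs) js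
      \<in> list_sumdiff ((p + p) * (2 ^ length js - 1)) ((p + p) * (2 ^ length js - 1)) A"
    by (rule Cons.IH)
  obtain q where "2 ^ length js = Suc q" using not0_implies_Suc by fastforce
  then have "p + (p + p) * (2 ^ length js - 1) = p * (2 ^ length (i # js) - 1)" by simp
  then show ?case using list_sumdiff_add[OF head tail] by simp
qed

lemma diff_tower_mem_sumdiff:
  assumes "set xs \<subseteq> A" "ds \<in> desc_indices (length xs) (Suc k)"
  shows "diff_tower xs ds \<in> sumdiff (2 ^ k) (2 ^ k - 1) A"
proof -
  obtain i js where ds: "ds = i # js" and len: "length js = k" and i: "i < length xs"
    and sorted: "sorted_wrt (>) (i # js)"
    using assms(2) by (auto simp: desc_indices_def length_Suc_conv)
  then have js: "sorted_wrt (>) js" "set js \<subseteq> {..<length (diffs xs)}" by auto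
  have elems: "set xs \<subseteq> list_sumdiff 1 0 A" using assms(1) list_sumdiff_single by blast
  then have head: "xs ! i \<in> list_sumdiff 1 0 A" using i by (meson nth_mem subsetD)
  have "set (diffs xs) \<subseteq> list_sumdiff 1 1 A"
    using set_diffs_subset_list_sumdiff[OF elems] by simp
  then have tail: "diff_tower (diffs xs) js \<in> list_sumdiff (2 ^ k - 1) (2 ^ k - 1) A"
    using diff_tower_mem_list_sumdiff[of "diffs xs" 1 A js] js len by simp
  have "diff_tower xs ds \<in> list_sumdiff (1 + (2 ^ k - 1)) (0 + (2 ^ k - 1)) A"
    unfolding ds using list_sumdiff_add[OF head tail] by simp
  moreover have "1 + (2 ^ k - 1) = (2 :: nat) ^ k" by simp
  ultimately show ?thesis using list_sumdiff_subset_sumdiff by auto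
qed

lemma binomial_le_card_sumdiff:
  assumes "kconvex_set k A"
  shows "card A choose Suc k \<le> card (sumdiff (2 ^ k) (2 ^ k - 1) A)"
proof -
  define xs where "xs = sorted_list_of_set A"
  have fin: "finite A" and kc: "kconvex_seq k xs"
    using assms by (simp_all add: kconvex_set_def xs_def)
  have "card A choose Suc k = card (desc_indices (length xs) (Suc k))"
    by (simp add: card_desc_indices xs_def)
  also have "\<dots> = card (diff_tower xs ` desc_indices (length xs) (Suc k))"
    using inj_on_diff_tower[OF kc] by (simp add: card_image)
  also have "\<dots> \<le> card (sumdiff (2 ^ k) (2 ^ k - 1) A)"
    using diff_tower_mem_sumdiff[of xs A] fin
    by (intro card_mono finite_sumdiff) (auto simp: xs_def)
  finally show ?thesis .
qed

lemma Suc_le_two_power_pred: "3 \<le> k \<Longrightarrow> k + 1 \<le> 2 ^ (k - 1)"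
proof (induction k rule: nat_induct_at_least)
  case base
  then show ?case by simp
next
  case (Suc k)
  then have "Suc k + 1 \<le> 2 * 2 ^ (k - 1)" by simp
  also have "\<dots> = 2 ^ (Suc k - 1)" using Suc.hyps by (simp add: power_Suc[symmetric])
  finally show ?case .
qed

lemma Suc_power_Suc_le: "2 \<le> k \<Longrightarrow> (k + 1) ^ (k + 1) \<le> 2 * 2 ^ k\<^sup>2"
proof (cases "k = 2")
  case False
  assume "2 \<le> k"
  with False have k: "3 \<le> k" by simp
  then obtain j where j: "k = Suc j" by (cases k) auto
  have "(k + 1) ^ (k + 1) \<le> (2 ^ (k - 1)) ^ (k + 1)"
    using Suc_le_two_power_pred[OF k] by (rule power_mono) simp
  also have "\<dots> = 2 ^ ((k - 1) * (k + 1))" by (simp only: power_mult)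
  also have "\<dots> \<le> 2 ^ k\<^sup>2" unfolding j by (intro power_increasing) (auto simp: power2_eq_square)
  finally show ?thesis by simp
qed simp

lemma card_power_le_card_sumdiff:
  assumes k: "2 \<le> k" and A: "kconvex_set k A"
  shows "real (card A) ^ (k + 1) \<le> 2 * 2 ^ k\<^sup>2 * real (card (sumdiff (2 ^ k) (2 ^ k - 1) A))"
proof -
  define N where "N = card A"
  define C where "C = card (sumdiff (2 ^ k) (2 ^ k - 1) A)"
  have fin: "finite A" using A by (simp add: kconvex_set_def)
  have "real ((k + 1) ^ (k + 1)) \<le> real (2 * 2 ^ k\<^sup>2)"
    using Suc_power_Suc_le[OF k] by (simp only: of_nat_le_iff)
  then have base: "real (k + 1) ^ (k + 1) \<le> 2 * 2 ^ k\<^sup>2"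
    by (simp only: of_nat_power of_nat_mult of_nat_numeral)
  consider "N = 0" | "1 \<le> N" "N \<le> k" | "k + 1 \<le> N" by linarith
  then have "real N ^ (k + 1) \<le> 2 * 2 ^ k\<^sup>2 * real C"
  proof cases
    case 2
    then have "A \<noteq> {}" by (auto simp: N_def)
    then have "1 \<le> C"
      using finite_sumdiff[OF fin] sumdiff_nonempty by (fastforce simp: C_def Suc_le_eq card_gt_0_iff)
    have "real N ^ (k + 1) \<le> real (k + 1) ^ (k + 1)" using 2 by (intro power_mono) auto
    also have "\<dots> \<le> 2 * 2 ^ k\<^sup>2" by (rule base)
    also have "\<dots> \<le> 2 * 2 ^ k\<^sup>2 * real C" using \<open>1 \<le> C\<close> by simp
    finally show ?thesis .
  next
    case 3
    have "real N ^ (k + 1) = real (k + 1) ^ (k + 1) * (real N / real (k + 1)) ^ (k + 1)"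
      by (simp add: power_divide)
    also have "\<dots> \<le> 2 * 2 ^ k\<^sup>2 * real (N choose (k + 1))"
      using base binomial_ge_n_over_k_pow_k[OF 3] by (intro mult_mono) simp_all
    also have "\<dots> \<le> 2 * 2 ^ k\<^sup>2 * real C"
      using binomial_le_card_sumdiff[OF A] by (simp add: N_def C_def)
    finally show ?thesis .
  qed (simp add: k)
  then show ?thesis by (simp add: N_def C_def)
qed

theorem theorem3:
  shows "\<exists>c::real. c > 0 \<and>
    (\<forall>(k::nat) (A::real set). k \<ge> 2 \<longrightarrow> finite A \<longrightarrow> kconvex_set k A \<longrightarrow>
       real (card (sumdiff (2^k) (2^k - 1) A)) \<ge> c * real (card A) ^ (k+1) / 2 ^ (k^2))"
proof (intro exI[of _ "1 / 2"] conjI allI impI)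
  fix k :: nat and A :: "real set"
  assume "k \<ge> 2" "finite A" "kconvex_set k A"
  then show "1 / 2 * real (card A) ^ (k + 1) / 2 ^ k\<^sup>2 \<le> real (card (sumdiff (2 ^ k) (2 ^ k - 1) A))"
    using card_power_le_card_sumdiff by (simp add: field_simps)
qed simp

end
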